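(* Let $\alpha=(\alpha_k)_{k\in\mathbb{N}}\in\ell^2$. For natural numbers $a<b$, the quantity $L([a,b])$ is nonincreasing as $a$ increases (with $b$ fixed) and nondecreasing as $b$ increases (with $a$ fixed).
   Context: $\mathbb{N}=\{0,1,2,\dots\}$. For a natural interval $I=[a,b]\cap\mathbb{N}$, write $\|f\|_{2,I}=(\sum_{k\in I}|f(k)|^2)^{1/2}$, $\mu(I)=\sum_{k\in I}|\alpha_k|^2$, and for $f\in\ell^2$ $$l(I,f)=\sum_{k\in I}\sum_{n\in I\setminus\{k\}}\Big|\alpha_k\alpha_n\sum_{j=\min(k,n)+1}^{\max(k,n)}f(j)\Big|^2.$$ Define $L(I)=\big(\sup_{\|f\|_{2,I}\le1} l(I,f)/\mu(I)\big)^{1/2}$ (supremum over $f\in\ell^2$ supported in $I$), and $L(I)=0$ if $\alpha_k=0$ for all $k\in I$. *)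

theory Defs
  imports "HOL-Analysis.Analysis"
begin

definition norm2_on :: "nat set \<Rightarrow> (nat \<Rightarrow> complex) \<Rightarrow> real" where
  "norm2_on I f = sqrt (\<Sum>k\<in>I. (cmod (f k))\<^sup>2)"

definition mu :: "(nat \<Rightarrow> complex) \<Rightarrow> nat set \<Rightarrow> real" where
  "mu \<alpha> I = (\<Sum>k\<in>I. (cmod (\<alpha> k))\<^sup>2)"

definition l_fun :: "(nat \<Rightarrow> complex) \<Rightarrow> nat set \<Rightarrow> (nat \<Rightarrow> complex) \<Rightarrow> real" where
  "l_fun \<alpha> I f = (\<Sum>k\<in>I. \<Sum>n\<in>I - {k}.
      (cmod (\<alpha> k * \<alpha> n * (\<Sum>j\<in>{min k n + 1..max k n}. f j)))\<^sup>2)"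

text \<open>Supremum over all f supported in I with norm at most 1 (such f are automatically in l2,
  since I is finite).\<close>
definition L_fun :: "(nat \<Rightarrow> complex) \<Rightarrow> nat set \<Rightarrow> real" where
  "L_fun \<alpha> I = (if (\<forall>k\<in>I. \<alpha> k = 0) then 0
     else sqrt (Sup {l_fun \<alpha> I f / mu \<alpha> I | f.
                       (\<forall>k. k \<notin> I \<longrightarrow> f k = 0) \<and> norm2_on I f \<le> 1}))"

end

theory Submission
  imports Defs
begin

(* With partial sums x n = f 0 + ... + f n and weights w k = |\<alpha> k|\<^sup>2 one has
   l(I,f) = \<Sum>k,n\<in>I. w k w n |x n - x k|\<^sup>2 = 2 \<mu>(I) \<Sum>n\<in>I. w n |x n - c|\<^sup>2 - 2 |\<Sum>n\<in>I. w n (x n - c)|\<^sup>2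
   for every c, so l(I,f)/\<mu>(I) is twice the weighted variance of x on I.  Adding points to I
   cannot decrease it: comparing the old points with c = x q for each new point q gives
   l(I,f) \<mu>(J) \<le> l(J,f) \<mu>(I) for I \<subseteq> J.  Since every f admissible for I is admissible
   for J, the supremum defining L grows with the interval. *)

definition pair_dispersion :: "('i \<Rightarrow> real) \<Rightarrow> ('i \<Rightarrow> 'a::real_normed_vector) \<Rightarrow> 'i set \<Rightarrow> real" where
  "pair_dispersion w x S = (\<Sum>k\<in>S. \<Sum>n\<in>S. w k * w n * (norm (x n - x k))\<^sup>2)"

lemma pair_dispersion_eq:
  fixes x :: "'i \<Rightarrow> 'a::real_inner"
  shows "pair_dispersion w x I
       = 2 * sum w I * (\<Sum>n\<in>I. w n * (norm (x n))\<^sup>2) - 2 * (norm (\<Sum>n\<in>I. w n *\<^sub>R x n))\<^sup>2"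
proof -
  have "w k * w n * (norm (x n - x k))\<^sup>2
      = w k * (w n * (norm (x n))\<^sup>2) + (w k * (norm (x k))\<^sup>2) * w n - 2 * (w k * w n * inner (x n) (x k))"
    for k n
    by (simp add: power2_norm_eq_inner inner_diff inner_commute algebra_simps)
  then have "pair_dispersion w x I
      = sum w I * (\<Sum>n\<in>I. w n * (norm (x n))\<^sup>2) + (\<Sum>k\<in>I. w k * (norm (x k))\<^sup>2) * sum w I
        - 2 * (\<Sum>k\<in>I. \<Sum>n\<in>I. w k * w n * inner (x n) (x k))"
    unfolding pair_dispersion_def
    by (simp only: sum.distrib sum_subtractf flip: sum_distrib_left sum_distrib_right)
  also have "(\<Sum>k\<in>I. \<Sum>n\<in>I. w k * w n * inner (x n) (x k)) = (norm (\<Sum>n\<in>I. w n *\<^sub>R x n))\<^sup>2"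
    by (simp add: power2_norm_eq_inner inner_sum_left inner_sum_right sum_distrib_left ac_simps)
  finally show ?thesis by (simp add: mult.commute)
qed

lemma pair_dispersion_le:
  fixes x :: "'i \<Rightarrow> 'a::real_inner"
  shows "pair_dispersion w x I \<le> 2 * sum w I * (\<Sum>n\<in>I. w n * (norm (x n - c))\<^sup>2)"
proof -
  have "pair_dispersion w x I = pair_dispersion w (\<lambda>n. x n - c) I"
    by (simp add: pair_dispersion_def)
  then show ?thesis
    using pair_dispersion_eq[of w "\<lambda>n. x n - c" I] by simp
qed

lemma pair_dispersion_nonneg:
  assumes "\<forall>k\<in>S. 0 \<le> w k"
  shows "0 \<le> pair_dispersion w x S"
  unfolding pair_dispersion_def using assms by (simp add: sum_nonneg)

lemma pair_dispersion_Un: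
  fixes x :: "'i \<Rightarrow> 'a::real_normed_vector"
  assumes "finite A" "finite B" "A \<inter> B = {}"
  shows "pair_dispersion w x (A \<union> B) = pair_dispersion w x A
           + 2 * (\<Sum>q\<in>B. \<Sum>k\<in>A. w k * w q * (norm (x q - x k))\<^sup>2) + pair_dispersion w x B"
proof -
  have swap: "(\<Sum>k\<in>B. \<Sum>n\<in>A. w k * w n * (norm (x n - x k))\<^sup>2)
      = (\<Sum>q\<in>B. \<Sum>k\<in>A. w k * w q * (norm (x q - x k))\<^sup>2)"
    by (simp add: norm_minus_commute mult.commute)
  show ?thesis
    unfolding pair_dispersion_def using assms
    by (simp add: sum.union_disjoint sum.distrib swap sum.swap[of _ A B])
qed

lemma pair_dispersion_cross_mono:
  fixes x :: "'i \<Rightarrow> 'a::real_inner"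
  assumes "finite J" "I \<subseteq> J" "\<forall>k\<in>J. 0 \<le> w k"
  shows "pair_dispersion w x I * sum w J \<le> pair_dispersion w x J * sum w I"
proof -
  define N where "N = J - I"
  define cross where "cross = (\<Sum>q\<in>N. \<Sum>k\<in>I. w k * w q * (norm (x q - x k))\<^sup>2)"
  have J: "J = I \<union> N" "finite I" "finite N" "I \<inter> N = {}"
    using assms finite_subset unfolding N_def by auto
  have "w q * pair_dispersion w x I \<le> 2 * sum w I * (\<Sum>k\<in>I. w k * w q * (norm (x q - x k))\<^sup>2)"
    if "q \<in> N" for q
  proof -
    have "w q * pair_dispersion w x I \<le> w q * (2 * sum w I * (\<Sum>k\<in>I. w k * (norm (x k - x q))\<^sup>2))"
      using pair_dispersion_le that assms(3) J(1) by (intro mult_left_mono) auto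
    then show ?thesis
      by (simp add: sum_distrib_left norm_minus_commute ac_simps)
  qed
  then have "sum w N * pair_dispersion w x I \<le> 2 * sum w I * cross"
    unfolding cross_def sum_distrib_right sum_distrib_left[of "2 * sum w I"] by (rule sum_mono)
  moreover have "0 \<le> sum w I * pair_dispersion w x N"
    using assms J by (simp add: sum_nonneg pair_dispersion_nonneg)
  moreover have "sum w J = sum w I + sum w N"
    using J by (simp add: sum.union_disjoint)
  moreover have "pair_dispersion w x J = pair_dispersion w x I + 2 * cross + pair_dispersion w x N"
    unfolding cross_def J(1) using J(2-4) by (rule pair_dispersion_Un)
  ultimately show ?thesis
    by (simp add: algebra_simps)
qed

lemma sum_Suc_atLeastAtMost_eq_diff:
  fixes f :: "nat \<Rightarrow> 'a::ab_group_add"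
  assumes "m \<le> n"
  shows "(\<Sum>j\<in>{Suc m..n}. f j) = (\<Sum>j\<le>n. f j) - (\<Sum>j\<le>m. f j)"
  using sum_diff_nat_ivl[of 0 "Suc m" "Suc n" f] assms
  by (simp add: atLeastLessThanSuc_atLeastAtMost atMost_atLeast0)

lemma l_fun_eq_pair_dispersion:
  assumes "finite I"
  shows "l_fun \<alpha> I f = pair_dispersion (\<lambda>k. (cmod (\<alpha> k))\<^sup>2) (\<lambda>n. \<Sum>j\<le>n. f j) I"
proof -
  have "cmod (\<Sum>j\<in>{min k n + 1..max k n}. f j) = cmod ((\<Sum>j\<le>n. f j) - (\<Sum>j\<le>k. f j))" for k n
    by (cases "k \<le> n")
      (simp_all add: sum_Suc_atLeastAtMost_eq_diff max_def min_def norm_minus_commute)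
  then have "l_fun \<alpha> I f = (\<Sum>k\<in>I. \<Sum>n\<in>I - {k}.
      (cmod (\<alpha> k))\<^sup>2 * (cmod (\<alpha> n))\<^sup>2 * (cmod ((\<Sum>j\<le>n. f j) - (\<Sum>j\<le>k. f j)))\<^sup>2)"
    unfolding l_fun_def by (simp add: norm_mult power_mult_distrib)
  also have "\<dots> = pair_dispersion (\<lambda>k. (cmod (\<alpha> k))\<^sup>2) (\<lambda>n. \<Sum>j\<le>n. f j) I"
    unfolding pair_dispersion_def using assms by (intro sum.cong[OF refl]) (simp add: sum_diff1)
  finally show ?thesis .
qed

lemma l_fun_mu_cross_mono:
  assumes "finite J" "I \<subseteq> J"
  shows "l_fun \<alpha> I f * mu \<alpha> J \<le> l_fun \<alpha> J f * mu \<alpha> I"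
  using pair_dispersion_cross_mono[OF assms, of "\<lambda>k. (cmod (\<alpha> k))\<^sup>2" "\<lambda>n. \<Sum>j\<le>n. f j"]
    finite_subset[OF assms(2,1)]
  by (simp add: l_fun_eq_pair_dispersion assms(1) mu_def)

lemma norm_le_one_if_norm2_on_le_one:
  assumes "finite I" "norm2_on I f \<le> 1" "j \<in> I"
  shows "cmod (f j) \<le> 1"
proof -
  have "(cmod (f j))\<^sup>2 \<le> (\<Sum>k\<in>I. (cmod (f k))\<^sup>2)"
    using assms(1,3) by (intro member_le_sum) auto
  also have "\<dots> \<le> 1"
    using assms(2) by (simp add: norm2_on_def)
  finally show ?thesis
    by (simp add: power_le_one_iff)
qed

lemma l_fun_div_mu_le:
  assumes "finite I" "\<And>j. cmod (f j) \<le> 1"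
  shows "l_fun \<alpha> I f / mu \<alpha> I \<le> 2 * (\<Sum>n\<in>I. (cmod (\<alpha> n))\<^sup>2 * (real n + 1)\<^sup>2)"
proof -
  have partial_sum_le: "cmod (\<Sum>j\<le>n. f j) \<le> real n + 1" for n
    using norm_sum[of f "{..n}"] sum_mono[of "{..n}" "\<lambda>j. cmod (f j)" "\<lambda>_. 1"] assms(2)
    by simp
  have "l_fun \<alpha> I f \<le> 2 * mu \<alpha> I * (\<Sum>n\<in>I. (cmod (\<alpha> n))\<^sup>2 * (cmod (\<Sum>j\<le>n. f j))\<^sup>2)"
    using pair_dispersion_le[where c = 0] by (simp add: l_fun_eq_pair_dispersion assms(1) mu_def)
  also have "\<dots> \<le> 2 * mu \<alpha> I * (\<Sum>n\<in>I. (cmod (\<alpha> n))\<^sup>2 * (real n + 1)\<^sup>2)"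
    using partial_sum_le
    by (intro mult_left_mono sum_mono power_mono) (auto simp: mu_def sum_nonneg)
  finally show ?thesis
    by (cases "mu \<alpha> I = 0") (auto simp: pos_divide_le_eq mu_def sum_nonneg less_le ac_simps)
qed

definition L_ratios :: "(nat \<Rightarrow> complex) \<Rightarrow> nat set \<Rightarrow> real set" where
  "L_ratios \<alpha> I = {l_fun \<alpha> I f / mu \<alpha> I | f. (\<forall>k. k \<notin> I \<longrightarrow> f k = 0) \<and> norm2_on I f \<le> 1}"

lemma L_fun_eq_sqrt_Sup_L_ratios:
  "L_fun \<alpha> I = (if \<forall>k\<in>I. \<alpha> k = 0 then 0 else sqrt (Sup (L_ratios \<alpha> I)))"
  by (simp add: L_fun_def L_ratios_def)

lemma zero_in_L_ratios: "0 \<in> L_ratios \<alpha> I"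
proof -
  have "l_fun \<alpha> I (\<lambda>_. 0) / mu \<alpha> I \<in> L_ratios \<alpha> I"
    unfolding L_ratios_def by (auto simp: norm2_on_def)
  then show ?thesis
    by (simp add: l_fun_def)
qed

lemma bdd_above_L_ratios:
  assumes "finite I"
  shows "bdd_above (L_ratios \<alpha> I)"
proof (rule bdd_aboveI)
  fix r assume "r \<in> L_ratios \<alpha> I"
  then obtain f where r: "r = l_fun \<alpha> I f / mu \<alpha> I"
    and "\<forall>k. k \<notin> I \<longrightarrow> f k = 0" and "norm2_on I f \<le> 1"
    unfolding L_ratios_def by blast
  then have "cmod (f j) \<le> 1" for j
    using norm_le_one_if_norm2_on_le_one[OF assms] by (cases "j \<in> I") auto
  then show "r \<le> 2 * (\<Sum>n\<in>I. (cmod (\<alpha> n))\<^sup>2 * (real n + 1)\<^sup>2)"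
    unfolding r by (rule l_fun_div_mu_le[OF assms])
qed

lemma L_fun_nonneg:
  assumes "finite I"
  shows "0 \<le> L_fun \<alpha> I"
  using cSup_upper[OF zero_in_L_ratios bdd_above_L_ratios[OF assms]]
  by (simp add: L_fun_eq_sqrt_Sup_L_ratios)

lemma mu_mono:
  assumes "finite J" "I \<subseteq> J"
  shows "mu \<alpha> I \<le> mu \<alpha> J"
  unfolding mu_def using assms by (intro sum_mono2) auto

lemma L_ratios_dominated:
  assumes "finite J" "I \<subseteq> J" "0 < mu \<alpha> I" "r \<in> L_ratios \<alpha> I"
  shows "\<exists>s\<in>L_ratios \<alpha> J. r \<le> s"
proof -
  obtain f where r: "r = l_fun \<alpha> I f / mu \<alpha> I"
    and supp: "\<forall>k. k \<notin> I \<longrightarrow> f k = 0" and norm: "norm2_on I f \<le> 1"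
    using assms(4) unfolding L_ratios_def by blast
  have "norm2_on J f = norm2_on I f"
    unfolding norm2_on_def using assms(1,2) supp by (subst sum.mono_neutral_right[of J I]) auto
  then have "l_fun \<alpha> J f / mu \<alpha> J \<in> L_ratios \<alpha> J"
    unfolding L_ratios_def using assms(2) supp norm by (intro CollectI exI[of _ f]) auto
  moreover have "r \<le> l_fun \<alpha> J f / mu \<alpha> J"
  proof -
    have "0 < mu \<alpha> J"
      using assms(3) mu_mono[OF assms(1,2), of \<alpha>] by linarith
    then show ?thesis
      using l_fun_mu_cross_mono[OF assms(1,2), of \<alpha> f] assms(3)
      by (simp add: r field_simps)
  qed
  ultimately show ?thesis by blast
qed

lemma mu_pos_iff:
  assumes "finite I"
  shows "0 < mu \<alpha> I \<longleftrightarrow> (\<exists>k\<in>I. \<alpha> k \<noteq> 0)"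
  unfolding mu_def using assms by (simp add: less_le sum_nonneg sum_nonneg_eq_0_iff)

lemma L_fun_mono:
  assumes "finite J" "I \<subseteq> J"
  shows "L_fun \<alpha> I \<le> L_fun \<alpha> J"
proof (cases "\<forall>k\<in>I. \<alpha> k = 0")
  case True
  then show ?thesis
    using L_fun_nonneg[OF assms(1)] by (simp add: L_fun_eq_sqrt_Sup_L_ratios)
next
  case False
  have "0 < mu \<alpha> I"
    using False finite_subset[OF assms(2,1)] by (simp add: mu_pos_iff)
  then have "Sup (L_ratios \<alpha> I) \<le> Sup (L_ratios \<alpha> J)"
    using zero_in_L_ratios bdd_above_L_ratios[OF assms(1)] L_ratios_dominated[OF assms]
    by (intro cSup_mono) blast+
  then show ?thesis
    using False assms(2) by (auto simp: L_fun_eq_sqrt_Sup_L_ratios)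
qed

theorem lemma3p2:
  fixes \<alpha> :: "nat \<Rightarrow> complex"
  assumes "summable (\<lambda>k. (cmod (\<alpha> k))\<^sup>2)"
  shows "(\<forall>a a' b. a \<le> a' \<and> a' < b \<longrightarrow> L_fun \<alpha> {a'..b} \<le> L_fun \<alpha> {a..b}) \<and>
         (\<forall>a b b'. a < b \<and> b \<le> b' \<longrightarrow> L_fun \<alpha> {a..b} \<le> L_fun \<alpha> {a..b'})"
  by (auto intro: L_fun_mono)

end
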